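(* There exists a residually finite monoid $M$ whose (right) action on its set of $\mathcal{L}$-classes is not residually finite.
   Context: A monoid is residually finite if distinct elements are separated by homomorphisms to finite monoids. $x\mathcal{L}y$ iff $Mx=My$; $M$ acts on $M/\mathcal{L}$ by $L_x\cdot m=L_{xm}$. A right action of $M$ on a set $X$ is residually finite if for any distinct $x,y\in X$ there exist an action of $M$ on a finite set $Y$ and an action homomorphism $f:X\to Y$ with $f(x)\neq f(y)$. *)

theory Defs
  imports "HOL-Algebra.Group"
begin

text \<open>Every finite monoid is isomorphic to one whose carrier is a
  set of naturals, so the target monoids are taken of type nat monoid.\<close>
definition residually_finite_monoid :: "('a, 'b) monoid_scheme \<Rightarrow> bool" where
  "residually_finite_monoid M \<longleftrightarrow>
     (\<forall>x\<in>carrier M. \<forall>y\<in>carrier M. x \<noteq> y \<longrightarrow>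
        (\<exists>(N :: nat monoid) f. monoid N \<and> finite (carrier N) \<and> f \<in> hom M N \<and> f x \<noteq> f y))"

definition right_action :: "('a, 'b) monoid_scheme \<Rightarrow> 'x set \<Rightarrow> ('x \<Rightarrow> 'a \<Rightarrow> 'x) \<Rightarrow> bool" where
  "right_action M X act \<longleftrightarrow>
     (\<forall>x\<in>X. \<forall>m\<in>carrier M. act x m \<in> X) \<and>
     (\<forall>x\<in>X. act x \<one>\<^bsub>M\<^esub> = x) \<and>
     (\<forall>x\<in>X. \<forall>m\<in>carrier M. \<forall>n\<in>carrier M. act x (m \<otimes>\<^bsub>M\<^esub> n) = act (act x m) n)"

definition action_hom ::
  "('a, 'b) monoid_scheme \<Rightarrow> 'x set \<Rightarrow> ('x \<Rightarrow> 'a \<Rightarrow> 'x) \<Rightarrow> 'y set \<Rightarrow> ('y \<Rightarrow> 'a \<Rightarrow> 'y) \<Rightarrow> ('x \<Rightarrow> 'y) \<Rightarrow> bool" where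
  "action_hom M X a Y b f \<longleftrightarrow>
     (\<forall>x\<in>X. f x \<in> Y) \<and> (\<forall>x\<in>X. \<forall>m\<in>carrier M. f (a x m) = b (f x) m)"

text \<open>Residually finite action; finite M-sets are taken with underlying set of naturals
  (every finite M-set is isomorphic to such).\<close>
definition residually_finite_action :: "('a, 'b) monoid_scheme \<Rightarrow> 'x set \<Rightarrow> ('x \<Rightarrow> 'a \<Rightarrow> 'x) \<Rightarrow> bool" where
  "residually_finite_action M X a \<longleftrightarrow>
     (\<forall>x\<in>X. \<forall>y\<in>X. x \<noteq> y \<longrightarrow>
        (\<exists>(Y :: nat set) b f. finite Y \<and> right_action M Y b \<and> action_hom M X a Y b f \<and> f x \<noteq> f y))"

definition Lclass :: "('a, 'b) monoid_scheme \<Rightarrow> 'a \<Rightarrow> 'a set" where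
  "Lclass M x = {y \<in> carrier M. (\<lambda>m. m \<otimes>\<^bsub>M\<^esub> x) ` carrier M = (\<lambda>m. m \<otimes>\<^bsub>M\<^esub> y) ` carrier M}"

definition Lclasses :: "('a, 'b) monoid_scheme \<Rightarrow> 'a set set" where
  "Lclasses M = Lclass M ` carrier M"

definition Lact :: "('a, 'b) monoid_scheme \<Rightarrow> 'a set \<Rightarrow> 'a \<Rightarrow> 'a set" where
  "Lact M L m = Lclass M ((SOME x. x \<in> L) \<otimes>\<^bsub>M\<^esub> m)"

end

theory Submission imports Defs "HOL-Library.Countable" begin

text \<open>Take the monoid with elements \<open>1\<close>, \<open>a\<^sup>r\<close> (\<open>r \<ge> 1\<close>), \<open>g\<^sub>r\<close> (\<open>r \<ge> 0\<close>),
  \<open>p\<^sub>z\<close> (\<open>z \<in> \<int>\<close>) and \<open>0\<close>, where \<open>a\<^sup>r a\<^sup>s = a\<^sup>r\<^sup>+\<^sup>s\<close>, \<open>a\<^sup>r g\<^sub>s = g\<^sub>r\<^sub>+\<^sub>s\<close>,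
  \<open>a\<^sup>r p\<^sub>z = p\<^sub>r\<^sub>+\<^sub>z\<close>, \<open>g\<^sub>r\<close> absorbs \<open>a\<^sup>s\<close> and \<open>g\<^sub>s\<close> on the right, \<open>g\<^sub>r p\<^sub>z = p\<^sub>r\<^sub>+\<^sub>1\<close>,
  and every other product of non-identity elements is \<open>0\<close>. Reducing all indices modulo
  \<open>m\<close> is a homomorphism onto a finite monoid, and a large \<open>m\<close> separates any two
  elements, so the monoid is residually finite. On the other hand \<open>p\<^sub>1 = g\<^sub>0 p\<^sub>z\<close> and
  \<open>p\<^sub>z = a\<^sup>z\<^sup>-\<^sup>1 p\<^sub>1\<close> for \<open>z \<ge> 1\<close>, so all \<open>p\<^sub>z\<close> with \<open>z \<ge> 1\<close> are \<open>\<L>\<close>-related,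
  whereas \<open>p\<^sub>0\<close> is not. Right multiplication by \<open>p\<^sub>-\<^sub>i\<close> sends \<open>L(a\<^sup>i)\<close> to \<open>L(p\<^sub>0)\<close>
  and \<open>L(a\<^sup>j)\<close> to \<open>L(p\<^sub>j\<^sub>-\<^sub>i) = L(p\<^sub>1)\<close> for \<open>i < j\<close>. A map to a finite \<open>M\<close>-set
  identifies two of the infinitely many \<open>L(a\<^sup>i)\<close>, hence also \<open>L(p\<^sub>0)\<close> and \<open>L(p\<^sub>1)\<close>.\<close>

definition nat_monoid_of :: "('a::countable) monoid \<Rightarrow> nat monoid" where
  "nat_monoid_of M =
     \<lparr>carrier = to_nat ` carrier M,
      mult = (\<lambda>u v. to_nat (from_nat u \<otimes>\<^bsub>M\<^esub> from_nat v)),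
      one = to_nat \<one>\<^bsub>M\<^esub>\<rparr>"

lemma nat_monoid_of_simps [simp]:
  "carrier (nat_monoid_of M) = to_nat ` carrier M"
  "to_nat x \<otimes>\<^bsub>nat_monoid_of M\<^esub> to_nat y = to_nat (x \<otimes>\<^bsub>M\<^esub> y)"
  "\<one>\<^bsub>nat_monoid_of M\<^esub> = to_nat \<one>\<^bsub>M\<^esub>"
  by (auto simp: nat_monoid_of_def)

lemma monoid_nat_monoid_of: "monoid M \<Longrightarrow> monoid (nat_monoid_of M)"
  by (rule monoidI) (auto simp: monoid.m_assoc intro!: imageI monoid.m_closed)

lemma hom_nat_monoid_of:
  "h \<in> hom M N \<Longrightarrow> (\<lambda>u. to_nat (h (from_nat u))) \<in> hom (nat_monoid_of M) (nat_monoid_of N)"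
  unfolding hom_def by auto

lemma residually_finite_monoid_nat_monoid_ofI:
  fixes M :: "'a::countable monoid"
  assumes "\<And>x y. x \<in> carrier M \<Longrightarrow> y \<in> carrier M \<Longrightarrow> x \<noteq> y \<Longrightarrow>
             \<exists>(N :: 'c::countable monoid) h. monoid N \<and> finite (carrier N) \<and> h \<in> hom M N \<and> h x \<noteq> h y"
  shows "residually_finite_monoid (nat_monoid_of M)"
  unfolding residually_finite_monoid_def
proof (intro ballI impI)
  fix u v assume "u \<in> carrier (nat_monoid_of M)" "v \<in> carrier (nat_monoid_of M)" "u \<noteq> v"
  then obtain x y where xy: "x \<in> carrier M" "y \<in> carrier M" "x \<noteq> y" "u = to_nat x" "v = to_nat y"
    by auto
  then obtain N :: "'c monoid" and h
    where "monoid N" "finite (carrier N)" "h \<in> hom M N" "h x \<noteq> h y"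
    using assms by blast
  then show "\<exists>(N :: nat monoid) f. monoid N \<and> finite (carrier N) \<and>
               f \<in> hom (nat_monoid_of M) N \<and> f u \<noteq> f v"
    using xy
    by (intro exI[of _ "nat_monoid_of N"] exI[of _ "\<lambda>u. to_nat (h (from_nat u))"]
        conjI monoid_nat_monoid_of hom_nat_monoid_of) auto
qed

definition lprincipal :: "('a, 'b) monoid_scheme \<Rightarrow> 'a \<Rightarrow> 'a set" where
  "lprincipal M x = (\<lambda>m. m \<otimes>\<^bsub>M\<^esub> x) ` carrier M"

lemma Lclass_eq_iff:
  "p \<in> carrier M \<Longrightarrow> Lclass M p = Lclass M q \<longleftrightarrow> lprincipal M p = lprincipal M q"
  unfolding Lclass_def lprincipal_def by blast

lemma lprincipal_mult_right:
  assumes "monoid M" "x \<in> carrier M" "m \<in> carrier M"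
  shows "lprincipal M (x \<otimes>\<^bsub>M\<^esub> m) = (\<lambda>u. u \<otimes>\<^bsub>M\<^esub> m) ` lprincipal M x"
  unfolding lprincipal_def image_image using assms by (auto simp: monoid.m_assoc)

lemma Lact_Lclass:
  assumes M: "monoid M" and "x \<in> carrier M" "m \<in> carrier M"
  shows "Lact M (Lclass M x) m = Lclass M (x \<otimes>\<^bsub>M\<^esub> m)"
proof -
  define w where "w = (SOME w. w \<in> Lclass M x)"
  have "x \<in> Lclass M x" using \<open>x \<in> carrier M\<close> by (simp add: Lclass_def)
  then have "w \<in> Lclass M x" unfolding w_def by (rule someI)
  then have "w \<in> carrier M" "lprincipal M w = lprincipal M x"
    by (auto simp: Lclass_def lprincipal_def)
  then have "lprincipal M (w \<otimes>\<^bsub>M\<^esub> m) = lprincipal M (x \<otimes>\<^bsub>M\<^esub> m)"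
    using assms by (simp add: lprincipal_mult_right)
  then show ?thesis
    unfolding Lact_def w_def[symmetric] using M \<open>w \<in> carrier M\<close> \<open>m \<in> carrier M\<close>
    by (simp add: Lclass_eq_iff monoid.m_closed)
qed

lemma mem_lprincipal_self: "monoid M \<Longrightarrow> x \<in> carrier M \<Longrightarrow> x \<in> lprincipal M x"
  unfolding lprincipal_def by (rule image_eqI[of _ _ "\<one>\<^bsub>M\<^esub>"]) auto

lemma lprincipal_subset:
  assumes M: "monoid M" and "y \<in> carrier M" "x \<in> lprincipal M y"
  shows "lprincipal M x \<subseteq> lprincipal M y"
proof
  obtain k where k: "k \<in> carrier M" "x = k \<otimes>\<^bsub>M\<^esub> y"
    using assms(3) by (auto simp: lprincipal_def)
  fix z assume "z \<in> lprincipal M x"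
  then obtain n where n: "n \<in> carrier M" "z = n \<otimes>\<^bsub>M\<^esub> x"
    by (auto simp: lprincipal_def)
  have "z = (n \<otimes>\<^bsub>M\<^esub> k) \<otimes>\<^bsub>M\<^esub> y"
    using M k n \<open>y \<in> carrier M\<close> by (simp add: monoid.m_assoc)
  then show "z \<in> lprincipal M y"
    using M k n unfolding lprincipal_def by (blast intro: monoid.m_closed)
qed

lemma Lclass_eqI:
  assumes "monoid M" "x \<in> carrier M" "y \<in> carrier M"
    and "x \<in> lprincipal M y" "y \<in> lprincipal M x"
  shows "Lclass M x = Lclass M y"
  using assms by (simp add: Lclass_eq_iff lprincipal_subset subset_antisym)

lemma Lclass_neqI:
  assumes "monoid M" "x \<in> carrier M" "x \<notin> lprincipal M y"
  shows "Lclass M x \<noteq> Lclass M y"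
  using assms by (auto simp: Lclass_eq_iff dest: mem_lprincipal_self)

text \<open>A finite quotient of the \<open>M\<close>-set must identify two members of the infinite
  family, and hence also their translates \<open>u\<close> and \<open>v\<close>.\<close>

lemma not_residually_finite_actionI:
  fixes I :: "'i::linorder set"
  assumes "infinite I" "x ` I \<subseteq> X" "u \<in> X" "v \<in> X" "u \<noteq> v"
    and reach: "\<And>i j. i \<in> I \<Longrightarrow> j \<in> I \<Longrightarrow> i < j \<Longrightarrow>
                  \<exists>m\<in>carrier M. act (x i) m = u \<and> act (x j) m = v"
  shows "\<not> residually_finite_action M X act"
proof
  assume "residually_finite_action M X act"
  then obtain Y :: "nat set" and b f
    where "finite Y" and f: "action_hom M X act Y b f" and "f u \<noteq> f v"
    using assms(3-5) unfolding residually_finite_action_def by blast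
  have "(f \<circ> x) ` I \<subseteq> Y"
    using f assms(2) by (auto simp: action_hom_def)
  then have "\<not> inj_on (f \<circ> x) I"
    using \<open>finite Y\<close> \<open>infinite I\<close> by (metis finite_imageD finite_subset)
  then obtain i j where ij: "i \<in> I" "j \<in> I" "i < j" "f (x i) = f (x j)"
    unfolding inj_on_def by (metis comp_apply linorder_neqE)
  then obtain m where m: "m \<in> carrier M" "act (x i) m = u" "act (x j) m = v"
    using reach by blast
  have "f (act (x i) m) = f (act (x j) m)"
    using f ij m(1) assms(2) unfolding action_hom_def by (metis image_subset_iff)
  with m \<open>f u \<noteq> f v\<close> show False by simp
qed

datatype elt = One | A int | G int | P int | Zero

instance elt :: countable by countable_datatype

text \<open>Indices are computed modulo \<open>m\<close>; for \<open>m = 0\<close> this is the infinite monoid,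
  since \<open>x mod 0 = x\<close>.\<close>

fun mul :: "int \<Rightarrow> elt \<Rightarrow> elt \<Rightarrow> elt" where
  "mul m One e = e"
| "mul m (A r) One = A r"
| "mul m (A r) (A s) = A ((r + s) mod m)"
| "mul m (A r) (G s) = G ((r + s) mod m)"
| "mul m (A r) (P z) = P ((r + z) mod m)"
| "mul m (A r) Zero = Zero"
| "mul m (G r) One = G r"
| "mul m (G r) (A s) = G r"
| "mul m (G r) (G s) = G r"
| "mul m (G r) (P z) = P ((r + 1) mod m)"
| "mul m (G r) Zero = Zero"
| "mul m (P z) One = P z"
| "mul m (P z) (A s) = Zero"
| "mul m (P z) (G s) = Zero"
| "mul m (P z) (P w) = Zero"
| "mul m (P z) Zero = Zero"
| "mul m Zero e = Zero"

lemma mul_assoc: "mul m (mul m x y) z = mul m x (mul m y z)"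
  by (cases x; cases y; cases z) (simp_all add: mod_simps ac_simps)

lemma mul_One_right [simp]: "mul m x One = x"
  by (cases x) auto

fun valid :: "int \<Rightarrow> elt \<Rightarrow> bool" where
  "valid m (A r) = (if m = 0 then 1 \<le> r else 0 \<le> r \<and> r < m)"
| "valid m (G r) = (if m = 0 then 0 \<le> r else 0 \<le> r \<and> r < m)"
| "valid m (P z) = (m = 0 \<or> 0 \<le> z \<and> z < m)"
| "valid m _ = True"

lemma valid_mul: "m \<ge> 0 \<Longrightarrow> valid m x \<Longrightarrow> valid m y \<Longrightarrow> valid m (mul m x y)"
  by (cases x; cases y) auto

definition elt_monoid :: "int \<Rightarrow> elt monoid" where
  "elt_monoid m = \<lparr>carrier = {e. valid m e}, mult = mul m, one = One\<rparr>"

lemma elt_monoid_simps [simp]: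
  "carrier (elt_monoid m) = {e. valid m e}"
  "x \<otimes>\<^bsub>elt_monoid m\<^esub> y = mul m x y"
  "\<one>\<^bsub>elt_monoid m\<^esub> = One"
  by (simp_all add: elt_monoid_def)

lemma monoid_elt_monoid: "m \<ge> 0 \<Longrightarrow> monoid (elt_monoid m)"
  unfolding elt_monoid_def by (rule monoidI) (auto simp: valid_mul mul_assoc)

lemma finite_carrier_elt_monoid:
  assumes "m > 0" shows "finite (carrier (elt_monoid m))"
proof -
  have "{e. valid m e} \<subseteq> {One, Zero} \<union> A ` {0..<m} \<union> G ` {0..<m} \<union> P ` {0..<m}"
  proof
    fix e assume "e \<in> {e. valid m e}"
    then show "e \<in> {One, Zero} \<union> A ` {0..<m} \<union> G ` {0..<m} \<union> P ` {0..<m}"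
      using assms by (cases e) auto
  qed
  then show ?thesis unfolding elt_monoid_def by (auto intro: finite_subset)
qed

fun reduce :: "int \<Rightarrow> elt \<Rightarrow> elt" where
  "reduce m (A r) = A (r mod m)"
| "reduce m (G r) = G (r mod m)"
| "reduce m (P z) = P (z mod m)"
| "reduce m e = e"

lemma reduce_mul: "reduce m (mul 0 x y) = mul m (reduce m x) (reduce m y)"
  by (cases x; cases y) (simp_all add: mod_simps ac_simps)

lemma reduce_hom: "m > 0 \<Longrightarrow> reduce m \<in> hom (elt_monoid 0) (elt_monoid m)"
proof (rule homI)
  fix x assume "m > 0"
  then show "reduce m x \<in> carrier (elt_monoid m)"
    by (cases x) (auto simp: elt_monoid_def)
qed (simp_all add: elt_monoid_def reduce_mul)

fun index :: "elt \<Rightarrow> int" where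
  "index (A r) = r"
| "index (G r) = r"
| "index (P z) = z"
| "index _ = 0"

lemma mod_eq_imp_eq_int:
  fixes r s m :: int
  assumes "r mod m = s mod m" "\<bar>r - s\<bar> < m"
  shows "r = s"
proof (rule ccontr)
  assume "r \<noteq> s"
  moreover have "m dvd r - s" using assms(1) by (simp add: mod_eq_dvd_iff)
  ultimately have "\<bar>m\<bar> \<le> \<bar>r - s\<bar>" by (simp add: dvd_imp_le_int)
  then show False using assms(2) by linarith
qed

lemma reduce_separates:
  "x \<noteq> y \<Longrightarrow> reduce (\<bar>index x - index y\<bar> + 1) x \<noteq> reduce (\<bar>index x - index y\<bar> + 1) y"
  by (cases x; cases y) (auto dest: mod_eq_imp_eq_int)

abbreviation M0 :: "nat monoid" where
  "M0 \<equiv> nat_monoid_of (elt_monoid 0)"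

lemma monoid_M0: "monoid M0"
  by (simp add: monoid_nat_monoid_of monoid_elt_monoid)

lemma residually_finite_M0: "residually_finite_monoid M0"
proof (rule residually_finite_monoid_nat_monoid_ofI)
  fix x y :: elt assume "x \<noteq> y"
  define m where "m = \<bar>index x - index y\<bar> + 1"
  have "m > 0" by (simp add: m_def)
  then show "\<exists>(N :: elt monoid) h. monoid N \<and> finite (carrier N) \<and>
               h \<in> hom (elt_monoid 0) N \<and> h x \<noteq> h y"
    using reduce_separates[OF \<open>x \<noteq> y\<close>]
    by (intro exI[of _ "elt_monoid m"] exI[of _ "reduce m"]
        conjI monoid_elt_monoid finite_carrier_elt_monoid reduce_hom) (auto simp: m_def)
qed

lemma to_nat_mem_lprincipal_M0:
  "valid 0 k \<Longrightarrow> e = mul 0 k e' \<Longrightarrow> to_nat e \<in> lprincipal M0 (to_nat e')"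
  unfolding lprincipal_def by (rule image_eqI[of _ _ "to_nat k"]) auto

lemma Lclass_P_eq_P1:
  assumes "z \<ge> 1" shows "Lclass M0 (to_nat (P z)) = Lclass M0 (to_nat (P 1))"
proof (rule Lclass_eqI[OF monoid_M0])
  show "to_nat (P z) \<in> lprincipal M0 (to_nat (P 1))"
  proof (cases "z = 1")
    case True then show ?thesis by (simp add: mem_lprincipal_self monoid_M0)
  next
    case False then show ?thesis
      using assms by (intro to_nat_mem_lprincipal_M0[of "A (z - 1)"]) auto
  qed
  show "to_nat (P 1) \<in> lprincipal M0 (to_nat (P z))"
    by (rule to_nat_mem_lprincipal_M0[of "G 0"]) auto
qed simp_all

lemma Lclass_P0_neq_P1: "Lclass M0 (to_nat (P 0)) \<noteq> Lclass M0 (to_nat (P 1))"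
proof (rule Lclass_neqI[OF monoid_M0])
  show "to_nat (P 0) \<notin> lprincipal M0 (to_nat (P 1))"
  proof
    assume "to_nat (P 0) \<in> lprincipal M0 (to_nat (P 1))"
    then obtain k where "valid 0 k" "P 0 = mul 0 k (P 1)"
      by (auto simp: lprincipal_def elt_monoid_def)
    then show False by (cases k) auto
  qed
qed simp

lemma Lact_Lclass_A_P:
  "i \<ge> 1 \<Longrightarrow> Lact M0 (Lclass M0 (to_nat (A i))) (to_nat (P z)) = Lclass M0 (to_nat (P (i + z)))"
  by (simp add: Lact_Lclass monoid_M0)

lemma not_residually_finite_Lact_M0: "\<not> residually_finite_action M0 (Lclasses M0) (Lact M0)"
proof (rule not_residually_finite_actionI)
  show "infinite {1::int..}" by (rule infinite_Ici)
  show "(\<lambda>i. Lclass M0 (to_nat (A i))) ` {1..} \<subseteq> Lclasses M0"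
    by (auto simp: Lclasses_def)
  show "Lclass M0 (to_nat (P 0)) \<in> Lclasses M0" "Lclass M0 (to_nat (P 1)) \<in> Lclasses M0"
    by (auto simp: Lclasses_def)
  show "Lclass M0 (to_nat (P 0)) \<noteq> Lclass M0 (to_nat (P 1))"
    by (rule Lclass_P0_neq_P1)
  fix i j :: int assume "i \<in> {1..}" "j \<in> {1..}" "i < j"
  moreover have "Lclass M0 (to_nat (P (j + - i))) = Lclass M0 (to_nat (P 1))"
    using \<open>i < j\<close> by (intro Lclass_P_eq_P1) simp
  ultimately show "\<exists>m\<in>carrier M0. Lact M0 (Lclass M0 (to_nat (A i))) m = Lclass M0 (to_nat (P 0))
                                \<and> Lact M0 (Lclass M0 (to_nat (A j))) m = Lclass M0 (to_nat (P 1))"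
    by (intro bexI[of _ "to_nat (P (- i))"]) (simp_all add: Lact_Lclass_A_P)
qed

theorem mainTheorem6:
  shows "\<exists>M :: nat monoid. monoid M \<and> residually_finite_monoid M \<and>
           \<not> residually_finite_action M (Lclasses M) (Lact M)"
  using monoid_M0 residually_finite_M0 not_residually_finite_Lact_M0 by blast

end
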